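(* Let $M$ be a connected real-analytic manifold and let $\mathcal F$ be an admissible sheaf of local vector fields on $M$ which is analytically determined. Assume every $p\in M$ has an open neighborhood $\mathcal V_p$ such that for every $q\in\mathcal V_p$ and every germ $\mathfrak g\in\mathfrak G^{\mathcal F}_q$ there is a real-analytic vector field $X$ on $\mathcal V_p$ with $\mathrm{germ}_q(X)=\mathfrak g$. Then $\mathcal F$ is regular.
   Context: A sheaf of local vector fields $\mathcal F$ on $M$ assigns to each connected open $U$ a subspace $\mathcal F(U)$ of smooth vector fields on $U$, stable under restriction to connected open subsets and under gluing. It is admissible if it has the unique continuation property (any $K\in\mathcal F(U)$, $U$ connected, vanishing on a nonempty open subset is $0$) and bounded rank ($\dim\mathcal F(U)\le N$ for a fixed $N$ and all connected open $U$). $\mathfrak G^{\mathcal F}_q$ is the space of germs at $q$ of elements of $\mathcal F$ defined near $q$ (identified if they agree near $q$), $\mathrm{germ}_q$ denotes the germ (of any vector field), $\kappa^{\mathcal F}_q=\dim\mathfrak G^{\mathcal F}_q$, and $\mathcal F$ is regular if it is admissible and $\kappa^{\mathcal F}$ is constant on $M$. Let $\mathfrak X^\omega(U)$ be the real-analytic vector fields and $C^\omega(U)$ the real-analytic functions on $U$. $\mathcal F$ is real-analytic if $\mathcal F(U)\subset\mathfrak X^\omega(U)$ for all $U$. A real-analytic $\mathcal F$ is analytically determined if for every open $U$ there is a collection $\mathcal A(U)$ of maps $F:\mathfrak X^\omega(U)\to C^\omega(U)$, $X\mapsto F^X$, such that (a) for open $V\subset U$, $F\in\mathcal A(U)$ and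 $X\in\mathfrak X^\omega(U)$, one has $F^X|_V=G^{X|_V}$ for some $G\in\mathcal A(V)$; (b) for every open $U$ and $X\in\mathfrak X^\omega(U)$, $X\in\mathcal F(U)$ if and only if $F^X\equiv0$ on $U$ for all $F\in\mathcal A(U)$. *)

theory Defs
  imports "HOL-Analysis.Analysis" "HOL-Library.Extended_Nat"
begin

definition multi_indices :: "('e::euclidean_space \<Rightarrow> nat) set" where
  "multi_indices = {\<alpha>. \<forall>i. i \<notin> Basis \<longrightarrow> \<alpha> i = 0}"

definition ranalytic_on :: "'e::euclidean_space set \<Rightarrow> ('e \<Rightarrow> real) \<Rightarrow> bool" where
  "ranalytic_on S f \<longleftrightarrow>
     (\<forall>x\<in>S. \<exists>r>0. \<exists>a :: ('e \<Rightarrow> nat) \<Rightarrow> real. \<forall>y\<in>ball x r.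
        ((\<lambda>\<alpha>. a \<alpha> * (\<Prod>b\<in>Basis. ((y - x) \<bullet> b) ^ \<alpha> b)) has_sum f y) multi_indices)"

definition vanalytic_on :: "'e::euclidean_space set \<Rightarrow> ('e \<Rightarrow> 'f::euclidean_space) \<Rightarrow> bool" where
  "vanalytic_on S f \<longleftrightarrow> (\<forall>b\<in>Basis. ranalytic_on S (\<lambda>y. f y \<bullet> b))"

primrec ck_on :: "nat \<Rightarrow> 'e::euclidean_space set \<Rightarrow> ('e \<Rightarrow> 'f::real_normed_vector) \<Rightarrow> bool" where
  "ck_on 0 S f = continuous_on S f"
| "ck_on (Suc k) S f = (continuous_on S f \<and>
      (\<exists>f'. (\<forall>x\<in>S. (f has_derivative f' x) (at x)) \<and> (\<forall>v. ck_on k S (\<lambda>x. f' x v))))"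

definition smooth_on :: "'e::euclidean_space set \<Rightarrow> ('e \<Rightarrow> 'f::real_normed_vector) \<Rightarrow> bool" where
  "smooth_on S f \<longleftrightarrow> (\<forall>k. ck_on k S f)"

text \<open>A chart is a pair (domain, coordinate map). The manifold is the whole
  topological type 'm, modelled on the Euclidean space 'e.\<close>
type_synonym ('m, 'e) chart = "'m set \<times> ('m \<Rightarrow> 'e)"

definition analytic_atlas :: "('m::topological_space, 'e::euclidean_space) chart set \<Rightarrow> bool" where
  "analytic_atlas A \<longleftrightarrow>
     (\<Union>c\<in>A. fst c) = UNIV \<and>
     (\<forall>c\<in>A. open (fst c) \<and> open (snd c ` fst c) \<and>
              (\<exists>\<psi>. homeomorphism (fst c) (snd c ` fst c) (snd c) \<psi>)) \<and>
     (\<forall>c\<in>A. \<forall>d\<in>A. vanalytic_on (snd c ` (fst c \<inter> fst d))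
                                  (snd d \<circ> inv_into (fst c) (snd c)))"

definition transition :: "('m, 'e) chart \<Rightarrow> ('m, 'e) chart \<Rightarrow> 'e \<Rightarrow> 'e" where
  "transition c d = snd d \<circ> inv_into (fst c) (snd c)"

text \<open>A (rough) vector field: for every chart c and point p its coordinate
  representation X c p; normalised to 0 outside the domain, and transforming
  with the Jacobian of the transition maps.\<close>
type_synonym ('m, 'e) vf = "('m, 'e) chart \<Rightarrow> 'm \<Rightarrow> 'e"

definition vector_field_on ::
  "('m::topological_space, 'e::euclidean_space) chart set \<Rightarrow> 'm set \<Rightarrow> ('m, 'e) vf \<Rightarrow> bool" where
  "vector_field_on A W X \<longleftrightarrow>
     (\<forall>c p. (c \<notin> A \<or> p \<notin> W \<or> p \<notin> fst c) \<longrightarrow> X c p = 0) \<and>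
     (\<forall>c\<in>A. \<forall>d\<in>A. \<forall>p\<in>W \<inter> fst c \<inter> fst d.
        \<exists>D. (transition c d has_derivative D) (at (snd c p)) \<and> X d p = D (X c p))"

definition local_rep :: "('m, 'e) vf \<Rightarrow> ('m, 'e) chart \<Rightarrow> 'e \<Rightarrow> 'e" where
  "local_rep X c = (\<lambda>y. X c (inv_into (fst c) (snd c) y))"

definition smooth_vf_on ::
  "('m::topological_space, 'e::euclidean_space) chart set \<Rightarrow> 'm set \<Rightarrow> ('m, 'e) vf \<Rightarrow> bool" where
  "smooth_vf_on A W X \<longleftrightarrow> vector_field_on A W X \<and>
     (\<forall>c\<in>A. smooth_on (snd c ` (W \<inter> fst c)) (local_rep X c))"

definition analytic_vf_on ::
  "('m::topological_space, 'e::euclidean_space) chart set \<Rightarrow> 'm set \<Rightarrow> ('m, 'e) vf \<Rightarrow> bool" where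
  "analytic_vf_on A W X \<longleftrightarrow> vector_field_on A W X \<and>
     (\<forall>c\<in>A. vanalytic_on (snd c ` (W \<inter> fst c)) (local_rep X c))"

definition analytic_fun_on ::
  "('m::topological_space, 'e::euclidean_space) chart set \<Rightarrow> 'm set \<Rightarrow> ('m \<Rightarrow> real) \<Rightarrow> bool" where
  "analytic_fun_on A W f \<longleftrightarrow>
     (\<forall>c\<in>A. ranalytic_on (snd c ` (W \<inter> fst c)) (f \<circ> inv_into (fst c) (snd c)))"

definition zero_vf :: "('m, 'e::real_vector) vf" where
  "zero_vf = (\<lambda>c p. 0)"

definition restrict_vf :: "'m set \<Rightarrow> ('m, 'e::real_vector) vf \<Rightarrow> ('m, 'e) vf" where
  "restrict_vf V X = (\<lambda>c p. if p \<in> V then X c p else 0)"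

text \<open>F U is only meaningful for connected open U.\<close>
definition sheaf_lvf ::
  "('m::topological_space, 'e::euclidean_space) chart set \<Rightarrow> ('m set \<Rightarrow> ('m, 'e) vf set) \<Rightarrow> bool" where
  "sheaf_lvf A F \<longleftrightarrow>
     (\<forall>U. connected U \<and> open U \<longrightarrow>
        F U \<subseteq> {X. smooth_vf_on A U X} \<and> zero_vf \<in> F U \<and>
        (\<forall>X\<in>F U. \<forall>Y\<in>F U. (\<lambda>c p. X c p + Y c p) \<in> F U) \<and>
        (\<forall>X\<in>F U. \<forall>r::real. (\<lambda>c p. r *\<^sub>R X c p) \<in> F U)) \<and>
     (\<forall>U V X. connected U \<and> open U \<and> connected V \<and> open V \<and> V \<subseteq> U \<and> X \<in> F U
        \<longrightarrow> restrict_vf V X \<in> F V) \<and>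
     (\<forall>U \<U> Xs. connected U \<and> open U \<and> \<Union>\<U> = U \<and>
        (\<forall>W\<in>\<U>. connected W \<and> open W \<and> Xs W \<in> F W) \<and>
        (\<forall>W1\<in>\<U>. \<forall>W2\<in>\<U>. \<forall>c. \<forall>p\<in>W1 \<inter> W2. Xs W1 c p = Xs W2 c p)
        \<longrightarrow> (\<exists>X\<in>F U. \<forall>W\<in>\<U>. restrict_vf W X = Xs W))"

definition vf_lin_indep :: "nat \<Rightarrow> (nat \<Rightarrow> ('m, 'e::real_vector) vf) \<Rightarrow> bool" where
  "vf_lin_indep k Xs \<longleftrightarrow>
     (\<forall>a::nat \<Rightarrow> real. (\<lambda>c p. \<Sum>i<k. a i *\<^sub>R Xs i c p) = zero_vf \<longrightarrow> (\<forall>i<k. a i = 0))"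

definition unique_continuation :: "('m::topological_space set \<Rightarrow> ('m, 'e::real_vector) vf set) \<Rightarrow> bool" where
  "unique_continuation F \<longleftrightarrow>
     (\<forall>U X W. connected U \<and> open U \<and> X \<in> F U \<and> open W \<and> W \<noteq> {} \<and> W \<subseteq> U \<and>
        (\<forall>c. \<forall>p\<in>W. X c p = 0) \<longrightarrow> X = zero_vf)"

definition bounded_rank :: "('m::topological_space set \<Rightarrow> ('m, 'e::real_vector) vf set) \<Rightarrow> bool" where
  "bounded_rank F \<longleftrightarrow>
     (\<exists>N::nat. \<forall>U. connected U \<and> open U \<longrightarrow>
        (\<forall>k Xs. (\<forall>i<k. Xs i \<in> F U) \<and> vf_lin_indep k Xs \<longrightarrow> k \<le> N))"

definition admissible ::
  "('m::topological_space, 'e::euclidean_space) chart set \<Rightarrow> ('m set \<Rightarrow> ('m, 'e) vf set) \<Rightarrow> bool" where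
  "admissible A F \<longleftrightarrow> sheaf_lvf A F \<and> unique_continuation F \<and> bounded_rank F"

definition germ_at :: "'m::topological_space \<Rightarrow> ('m, 'e) vf \<Rightarrow> ('m, 'e) vf set" where
  "germ_at q X = {Y. \<exists>V. open V \<and> q \<in> V \<and> (\<forall>c. \<forall>p\<in>V. Y c p = X c p)}"

definition germs :: "('m::topological_space set \<Rightarrow> ('m, 'e) vf set) \<Rightarrow> 'm \<Rightarrow> ('m, 'e) vf set set" where
  "germs F q = {germ_at q X | U X. connected U \<and> open U \<and> q \<in> U \<and> X \<in> F U}"

definition germ_lin_indep :: "'m::topological_space \<Rightarrow> nat \<Rightarrow> (nat \<Rightarrow> ('m, 'e::real_vector) vf) \<Rightarrow> bool" where
  "germ_lin_indep q k Xs \<longleftrightarrow>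
     (\<forall>a::nat \<Rightarrow> real. germ_at q (\<lambda>c p. \<Sum>i<k. a i *\<^sub>R Xs i c p) = germ_at q zero_vf
        \<longrightarrow> (\<forall>i<k. a i = 0))"

text \<open>kappa^F_q = dim G^F_q (supremum of sizes of independent families of germs).\<close>
definition kappa :: "('m::topological_space set \<Rightarrow> ('m, 'e::real_vector) vf set) \<Rightarrow> 'm \<Rightarrow> enat" where
  "kappa F q = Sup {enat k | k. \<exists>Us Xs. (\<forall>i<k. connected (Us i) \<and> open (Us i) \<and> q \<in> Us i \<and>
                                     Xs i \<in> F (Us i)) \<and> germ_lin_indep q k Xs}"

definition regular ::
  "('m::topological_space, 'e::euclidean_space) chart set \<Rightarrow> ('m set \<Rightarrow> ('m, 'e) vf set) \<Rightarrow> bool" where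
  "regular A F \<longleftrightarrow> admissible A F \<and> (\<exists>k0. \<forall>q. kappa F q = k0)"

definition real_analytic_sheaf ::
  "('m::topological_space, 'e::euclidean_space) chart set \<Rightarrow> ('m set \<Rightarrow> ('m, 'e) vf set) \<Rightarrow> bool" where
  "real_analytic_sheaf A F \<longleftrightarrow>
     (\<forall>U. connected U \<and> open U \<longrightarrow> F U \<subseteq> {X. analytic_vf_on A U X})"

text \<open>Sections of the sheaf over an arbitrary (possibly disconnected) open U.\<close>
definition sheaf_sections :: "('m::topological_space set \<Rightarrow> ('m, 'e::real_vector) vf set) \<Rightarrow> 'm set \<Rightarrow> ('m, 'e) vf set" where
  "sheaf_sections F U = {X. \<forall>V. connected V \<and> open V \<and> V \<subseteq> U \<longrightarrow> restrict_vf V X \<in> F V}"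

definition analytically_determined ::
  "('m::topological_space, 'e::euclidean_space) chart set \<Rightarrow> ('m set \<Rightarrow> ('m, 'e) vf set) \<Rightarrow> bool" where
  "analytically_determined A F \<longleftrightarrow> real_analytic_sheaf A F \<and>
     (\<exists>\<A> :: 'm set \<Rightarrow> (('m, 'e) vf \<Rightarrow> ('m \<Rightarrow> real)) set.
        (\<forall>U. open U \<longrightarrow> (\<forall>\<Phi>\<in>\<A> U. \<forall>X. analytic_vf_on A U X \<longrightarrow> analytic_fun_on A U (\<Phi> X))) \<and>
        (\<forall>U V \<Phi> X. open U \<and> open V \<and> V \<subseteq> U \<and> \<Phi> \<in> \<A> U \<and> analytic_vf_on A U X \<longrightarrow>
            (\<exists>G\<in>\<A> V. \<forall>p\<in>V. \<Phi> X p = G (restrict_vf V X) p)) \<and>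
        (\<forall>U X. open U \<and> analytic_vf_on A U X \<longrightarrow>
            (X \<in> sheaf_sections F U \<longleftrightarrow> (\<forall>\<Phi>\<in>\<A> U. \<forall>p\<in>U. \<Phi> X p = 0))))"

end

theory Submission
  imports Defs "HOL-Complex_Analysis.Complex_Analysis" "HOL-Computational_Algebra.Polynomial"
begin

text \<open>On a connected open set \<open>C\<close> inside one of the neighbourhoods \<open>V\<^sub>p\<close>, every germ of \<open>F\<close> at
  a point of \<open>C\<close> is the germ of an analytic field \<open>X\<close> on \<open>C\<close>. Since \<open>F\<close> is analytically determined,
  membership of \<open>X\<close> in \<open>F\<close> is expressed by the vanishing of analytic functions; these vanish near
  the point, hence on all of \<open>C\<close> by the identity theorem, so \<open>X \<in> F(C)\<close>. By unique continuation
  the germ map \<open>F(C) \<rightarrow> G\<^sup>F\<^sub>q\<close> is then an isomorphism for every \<open>q \<in> C\<close>, so \<open>\<kappa>\<^sup>F\<close> is locally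
  constant, hence constant on the connected manifold.\<close>

lemma islimpt_of_real_interval:
  assumes "\<delta> > 0"
  shows "complex_of_real \<tau> islimpt of_real ` {t. \<bar>t - \<tau>\<bar> < \<delta>}"
proof (rule islimpt_approachable[THEN iffD2], intro allI impI)
  fix e :: real assume "e > 0"
  define t where "t = \<tau> + min e \<delta> / 2"
  have "\<bar>t - \<tau>\<bar> < \<delta>" using \<open>\<delta> > 0\<close> \<open>e > 0\<close> by (simp add: t_def)
  then have "(of_real t :: complex) \<in> of_real ` {t. \<bar>t - \<tau>\<bar> < \<delta>}" by blast
  moreover have "dist (of_real t) (of_real \<tau> :: complex) < e" "of_real t \<noteq> (of_real \<tau> :: complex)"
    using \<open>\<delta> > 0\<close> \<open>e > 0\<close>
    by (simp_all only: dist_of_real of_real_eq_iff) (simp_all add: t_def dist_real_def)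
  ultimately show "\<exists>x'\<in>complex_of_real ` {t. \<bar>t - \<tau>\<bar> < \<delta>}.
      x' \<noteq> of_real \<tau> \<and> dist x' (of_real \<tau>) < e"
    by blast
qed

text \<open>Complexified, the sum is holomorphic on the disc of radius \<open>R\<close> and vanishes on a real
  segment, so it vanishes identically.\<close>
lemma real_power_series_coeff_eq_0:
  fixes c :: "nat \<Rightarrow> real"
  assumes summable: "\<And>t. \<bar>t\<bar> < R \<Longrightarrow> summable (\<lambda>n. c n * t ^ n)"
    and vanishing: "\<And>t. \<bar>t - \<tau>\<bar> < \<delta> \<Longrightarrow> (\<Sum>n. c n * t ^ n) = 0"
    and "\<bar>\<tau>\<bar> < R" "\<delta> > 0"
  shows "c n = 0"
proof -
  define F where "F = Abs_fps (\<lambda>n. complex_of_real (c n))"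
  define S where "S = ball (0::complex) R"
  have radius: "fps_conv_radius F \<ge> ereal R"
    unfolding fps_conv_radius_def
  proof (rule conv_radius_geI_ex')
    fix r :: real assume "0 < r" "ereal r < ereal R"
    then have "summable (\<lambda>n. complex_of_real (c n * r ^ n))"
      using summable by (simp only: summable_complex_of_real) simp
    then show "summable (\<lambda>n. fps_nth F n * of_real r ^ n)" by (simp add: F_def)
  qed
  have holo: "eval_fps F holomorphic_on S"
    by (rule holomorphic_on_eval_fps)
       (use radius in \<open>auto simp: S_def eball_def dist_norm intro: less_le_trans[of _ "ereal R"]\<close>)
  have eval_real: "eval_fps F (of_real t) = of_real (\<Sum>n. c n * t ^ n)" if "\<bar>t\<bar> < R" for t
    using suminf_of_real[OF summable[OF that], symmetric] by (simp add: eval_fps_def F_def)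
  define \<delta>' where "\<delta>' = min \<delta> (R - \<bar>\<tau>\<bar>)"
  have "\<delta>' > 0" using assms by (simp add: \<delta>'_def)
  define I :: "complex set" where "I = of_real ` {t. \<bar>t - \<tau>\<bar> < \<delta>'}"
  have I_S: "I \<subseteq> S" by (auto simp: I_def S_def \<delta>'_def dist_norm)
  have on_I: "eval_fps F z = 0" if "z \<in> I" for z
    using that eval_real vanishing by (auto simp: I_def \<delta>'_def)
  have limpt: "of_real \<tau> islimpt I"
    unfolding I_def using \<open>\<delta>' > 0\<close> by (rule islimpt_of_real_interval)
  have on_S: "eval_fps F w = 0" if "w \<in> S" for w
    by (rule analytic_continuation[OF holo _ _ I_S _ limpt on_I that]) (use assms(3) in \<open>auto simp: S_def\<close>)
  have "R > 0" using assms(3) by linarith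
  have "eval_fps F has_fps_expansion F"
    by (rule eval_fps_has_fps_expansion)
       (use radius \<open>R > 0\<close> in \<open>auto intro: less_le_trans[of _ "ereal R"]\<close>)
  moreover have "eval_fps F has_fps_expansion 0"
  proof -
    have "eventually (\<lambda>z. z \<in> S) (nhds 0)"
      by (rule eventually_nhds_in_open) (use \<open>R > 0\<close> in \<open>auto simp: S_def\<close>)
    then show ?thesis
      unfolding has_fps_expansion_def by (auto elim!: eventually_mono simp: on_S)
  qed
  ultimately have "F = 0" by (rule fps_expansion_unique_complex)
  then show ?thesis by (metis F_def fps_nth_Abs_fps fps_zero_nth of_real_eq_0_iff)
qed

definition power_series_on_ball ::
  "(('e::euclidean_space \<Rightarrow> nat) \<Rightarrow> real) \<Rightarrow> 'e \<Rightarrow> real \<Rightarrow> ('e \<Rightarrow> real) \<Rightarrow> bool" where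
  "power_series_on_ball a x r g \<longleftrightarrow>
     (\<forall>y\<in>ball x r. ((\<lambda>\<alpha>. a \<alpha> * (\<Prod>b\<in>Basis. ((y - x) \<bullet> b) ^ \<alpha> b)) has_sum g y) multi_indices)"

lemma ranalytic_on_iff_power_series:
  "ranalytic_on S f \<longleftrightarrow> (\<forall>x\<in>S. \<exists>r>0. \<exists>a. power_series_on_ball a x r f)"
  by (simp add: ranalytic_on_def power_series_on_ball_def)

definition multi_degree :: "('e::euclidean_space \<Rightarrow> nat) \<Rightarrow> nat" where
  "multi_degree \<alpha> = (\<Sum>b\<in>Basis. \<alpha> b)"

definition multi_indices_of_degree :: "nat \<Rightarrow> ('e::euclidean_space \<Rightarrow> nat) set" where
  "multi_indices_of_degree n = {\<alpha>\<in>multi_indices. multi_degree \<alpha> = n}"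

definition coord_monomial :: "'e::euclidean_space \<Rightarrow> ('e \<Rightarrow> nat) \<Rightarrow> real" where
  "coord_monomial v \<alpha> = (\<Prod>b\<in>Basis. (v \<bullet> b) ^ \<alpha> b)"

definition homogeneous_part :: "(('e::euclidean_space \<Rightarrow> nat) \<Rightarrow> real) \<Rightarrow> nat \<Rightarrow> 'e \<Rightarrow> real" where
  "homogeneous_part a n v = (\<Sum>\<alpha>\<in>multi_indices_of_degree n. a \<alpha> * coord_monomial v \<alpha>)"

lemma finite_multi_indices_of_degree:
  "finite (multi_indices_of_degree n :: ('e::euclidean_space \<Rightarrow> nat) set)"
proof -
  let ?extend = "\<lambda>(f :: 'e \<Rightarrow> nat) i. if i \<in> Basis then f i else 0"
  have "multi_indices_of_degree n \<subseteq> ?extend ` (Basis \<rightarrow>\<^sub>E {..n})"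
  proof
    fix \<alpha> :: "'e \<Rightarrow> nat" assume \<alpha>: "\<alpha> \<in> multi_indices_of_degree n"
    then have "\<alpha> = ?extend (restrict \<alpha> Basis)"
      by (auto simp: multi_indices_of_degree_def multi_indices_def fun_eq_iff)
    moreover have "restrict \<alpha> Basis \<in> Basis \<rightarrow>\<^sub>E {..n}"
      using \<alpha> member_le_sum[of _ Basis \<alpha>]
      by (auto simp: multi_indices_of_degree_def multi_degree_def)
    ultimately show "\<alpha> \<in> ?extend ` (Basis \<rightarrow>\<^sub>E {..n})" by blast
  qed
  then show ?thesis by (rule finite_subset) (intro finite_imageI finite_PiE; simp)
qed

lemma coord_monomial_scaleR: "coord_monomial (t *\<^sub>R v) \<alpha> = t ^ multi_degree \<alpha> * coord_monomial v \<alpha>"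
  by (simp add: coord_monomial_def multi_degree_def inner_scaleR_left power_mult_distrib
      prod.distrib power_sum)

lemma has_sum_multi_indices_sums_by_degree:
  fixes T :: "('e::euclidean_space \<Rightarrow> nat) \<Rightarrow> real"
  assumes "(T has_sum s) multi_indices"
  shows "(\<lambda>n. \<Sum>\<alpha>\<in>multi_indices_of_degree n. T \<alpha>) sums s"
proof -
  have "(T has_sum s) multi_indices
      \<longleftrightarrow> ((\<lambda>(n, \<alpha>). T \<alpha>) has_sum s) (Sigma UNIV multi_indices_of_degree)"
    by (rule has_sum_reindex_bij_witness[where j = "\<lambda>\<alpha>. (multi_degree \<alpha>, \<alpha>)" and i = snd])
       (auto simp: multi_indices_of_degree_def)
  with assms have "((\<lambda>(n, \<alpha>). T \<alpha>) has_sum s) (Sigma UNIV multi_indices_of_degree)"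
    by simp
  then have "((\<lambda>n. \<Sum>\<alpha>\<in>multi_indices_of_degree n. T \<alpha>) has_sum s) UNIV"
    by (rule has_sum_Sigma') (simp add: finite_multi_indices_of_degree)
  then show ?thesis by (rule has_sum_imp_sums)
qed

lemma homogeneous_parts_sums_on_line:
  assumes "power_series_on_ball a x r g" "\<bar>t\<bar> * norm v < r"
  shows "(\<lambda>n. homogeneous_part a n v * t ^ n) sums g (x + t *\<^sub>R v)"
proof -
  have "x + t *\<^sub>R v \<in> ball x r" using assms(2) by (simp add: dist_norm)
  then have "(\<lambda>n. \<Sum>\<alpha>\<in>multi_indices_of_degree n. a \<alpha> * coord_monomial (t *\<^sub>R v) \<alpha>)
      sums g (x + t *\<^sub>R v)"
    using assms(1) has_sum_multi_indices_sums_by_degree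
    by (force simp: power_series_on_ball_def coord_monomial_def)
  moreover have "(\<Sum>\<alpha>\<in>multi_indices_of_degree n. a \<alpha> * coord_monomial (t *\<^sub>R v) \<alpha>)
      = homogeneous_part a n v * t ^ n" for n
    unfolding homogeneous_part_def sum_distrib_right
    by (rule sum.cong) (auto simp: coord_monomial_scaleR multi_indices_of_degree_def)
  ultimately show ?thesis by simp
qed

lemma homogeneous_part_eq_0_if_eq_0_on_ball:
  assumes "e > 0" "\<And>v. v \<in> ball v0 e \<Longrightarrow> homogeneous_part a n v = 0"
  shows "homogeneous_part a n w = 0"
proof -
  define P where "P = (\<Sum>\<alpha>\<in>multi_indices_of_degree n.
    smult (a \<alpha>) (\<Prod>b\<in>Basis. [:v0 \<bullet> b, (w - v0) \<bullet> b:] ^ \<alpha> b))"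
  have poly_P: "poly P t = homogeneous_part a n (v0 + t *\<^sub>R (w - v0))" for t
    by (simp add: P_def homogeneous_part_def coord_monomial_def poly_sum poly_prod
        inner_add_left inner_scaleR_left algebra_simps)
  define \<eta> where "\<eta> = e / (norm (w - v0) + 1)"
  have "\<eta> > 0" using assms(1) by (simp add: \<eta>_def add_nonneg_pos)
  have "{0<..<\<eta>} \<subseteq> {t. poly P t = 0}"
  proof
    fix t assume t: "t \<in> {0<..<\<eta>}"
    have "norm (t *\<^sub>R (w - v0)) \<le> \<eta> * norm (w - v0)"
      using t by (auto intro: mult_right_mono)
    also have "\<dots> < e"
      using assms(1) by (simp add: \<eta>_def divide_less_eq not_less add_nonneg_nonneg)
    finally show "t \<in> {t. poly P t = 0}"
      using assms(2) by (simp add: poly_P dist_norm)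
  qed
  with \<open>\<eta> > 0\<close> have "infinite {t. poly P t = 0}"
    using finite_subset infinite_Ioo by blast
  then have "P = 0" using poly_roots_finite by blast
  then show ?thesis using poly_P[of 1] by simp
qed

text \<open>For \<open>v\<close> near \<open>y0 - x\<close> the points \<open>x + t v\<close> with \<open>\<bar>t\<bar> < R\<close>, where \<open>R > 1\<close>, stay in the ball
  of convergence, and those with \<open>t\<close> near \<open>1\<close> lie in the zero set of \<open>g\<close>; the one-variable
  identity theorem then kills every coefficient.\<close>
lemma homogeneous_part_eq_0_near:
  assumes series: "power_series_on_ball a x r g" and "dist x y0 < r" "\<epsilon> > 0"
    and vanishing: "\<And>y. y \<in> ball y0 \<epsilon> \<Longrightarrow> g y = 0"
  obtains e where "e > 0" "\<And>n v. v \<in> ball (y0 - x) e \<Longrightarrow> homogeneous_part a n v = 0"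
proof
  define \<rho> where "\<rho> = dist x y0"
  define e where "e = min (\<epsilon> / 2) ((r - \<rho>) / 2)"
  define m where "m = (r + \<rho>) / 2"
  define R where "R = r / m"
  define \<delta> where "\<delta> = min (\<epsilon> / (2 * r)) (R - 1)"
  have "\<rho> \<ge> 0" "\<rho> < r" using assms(2) by (simp_all add: \<rho>_def)
  then have "r > 0" "\<rho> < m" "m < r" by (simp_all add: m_def)
  then have "R > 1" "\<delta> > 0" using \<open>\<epsilon> > 0\<close> \<open>\<rho> \<ge> 0\<close> by (auto simp: R_def \<delta>_def)
  show "e > 0" using \<open>\<rho> < m\<close> \<open>m < r\<close> \<open>\<epsilon> > 0\<close> by (simp add: e_def)
  fix n v assume v: "v \<in> ball (y0 - x) e"
  have close: "norm (v - (y0 - x)) < e" using v by (simp add: dist_norm norm_minus_commute)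
  have "norm v \<le> norm (y0 - x) + norm (v - (y0 - x))" by (metis norm_triangle_sub add.commute)
  then have "norm v \<le> m" using close by (simp add: e_def m_def \<rho>_def dist_norm norm_minus_commute)
  have on_line: "\<bar>t\<bar> * norm v < r" if "\<bar>t\<bar> < R" for t
  proof -
    have "\<bar>t\<bar> * norm v \<le> \<bar>t\<bar> * m" using \<open>norm v \<le> m\<close> by (simp add: mult_left_mono)
    also have "\<dots> < R * m" using that \<open>\<rho> < m\<close> \<open>\<rho> \<ge> 0\<close> by simp
    finally show ?thesis using \<open>\<rho> < m\<close> \<open>\<rho> \<ge> 0\<close> by (simp add: R_def)
  qed
  show "homogeneous_part a n v = 0"
  proof (rule real_power_series_coeff_eq_0[where R = R and \<tau> = 1 and \<delta> = \<delta>])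
    fix t :: real assume "\<bar>t\<bar> < R"
    then show "summable (\<lambda>n. homogeneous_part a n v * t ^ n)"
      using homogeneous_parts_sums_on_line[OF series on_line] sums_summable by blast
  next
    fix t :: real assume t: "\<bar>t - 1\<bar> < \<delta>"
    then have "\<bar>t\<bar> < R" by (auto simp: \<delta>_def abs_less_iff)
    have "\<bar>t - 1\<bar> * norm v \<le> \<delta> * r"
      using t \<open>norm v \<le> m\<close> \<open>m < r\<close> by (intro mult_mono) auto
    also have "\<dots> \<le> \<epsilon> / 2" using \<open>r > 0\<close> by (simp add: \<delta>_def min_mult_distrib_right)
    finally have "norm ((t - 1) *\<^sub>R v) \<le> \<epsilon> / 2" by simp
    moreover have "dist y0 (x + t *\<^sub>R v) = norm ((t - 1) *\<^sub>R v + (v - (y0 - x)))"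
      by (simp add: dist_norm norm_minus_commute algebra_simps)
    then have "dist y0 (x + t *\<^sub>R v) \<le> norm ((t - 1) *\<^sub>R v) + norm (v - (y0 - x))"
      using norm_triangle_ineq by metis
    ultimately have "x + t *\<^sub>R v \<in> ball y0 \<epsilon>" using close by (simp add: e_def)
    then show "(\<Sum>n. homogeneous_part a n v * t ^ n) = 0"
      using vanishing homogeneous_parts_sums_on_line[OF series on_line[OF \<open>\<bar>t\<bar> < R\<close>]]
      by (metis sums_unique)
  qed (use \<open>R > 1\<close> \<open>\<delta> > 0\<close> in auto)
qed

lemma power_series_eq_0_if_eq_0_on_ball:
  assumes series: "power_series_on_ball a x r g" and "dist x y0 < r" "\<epsilon> > 0"
    and "\<And>y. y \<in> ball y0 \<epsilon> \<Longrightarrow> g y = 0" and "z \<in> ball x r"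
  shows "g z = 0"
proof -
  obtain e where "e > 0" "\<And>n v. v \<in> ball (y0 - x) e \<Longrightarrow> homogeneous_part a n v = 0"
    using homogeneous_part_eq_0_near[OF assms(1-4)] by blast
  then have "homogeneous_part a n (z - x) = 0" for n
    by (rule homogeneous_part_eq_0_if_eq_0_on_ball)
  moreover have "(\<lambda>n. homogeneous_part a n (z - x) * 1 ^ n) sums g (x + 1 *\<^sub>R (z - x))"
    using assms(5) by (intro homogeneous_parts_sums_on_line[OF series]) (simp add: dist_norm norm_minus_commute)
  ultimately have "(\<lambda>n. 0) sums g z" by simp
  then show ?thesis using sums_zero sums_unique2 by metis
qed

lemma analytic_atlas_chartD:
  assumes "analytic_atlas A" "c \<in> A"
  shows "open (fst c)" "open (snd c ` fst c)" "inj_on (snd c) (fst c)"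
    and "\<exists>\<psi>. homeomorphism (fst c) (snd c ` fst c) (snd c) \<psi>"
proof -
  obtain \<psi> where h: "homeomorphism (fst c) (snd c ` fst c) (snd c) \<psi>"
    using assms unfolding analytic_atlas_def by blast
  show "open (fst c)" "open (snd c ` fst c)" using assms unfolding analytic_atlas_def by auto
  show "inj_on (snd c) (fst c)" using h unfolding homeomorphism_def by (metis inj_on_inverseI)
  show "\<exists>\<psi>. homeomorphism (fst c) (snd c ` fst c) (snd c) \<psi>" using h by blast
qed

lemma analytic_atlas_cover:
  fixes A :: "('m::topological_space, 'e::euclidean_space) chart set" and q :: 'm
  assumes "analytic_atlas A"
  obtains c where "c \<in> A" "q \<in> fst c"
  using assms unfolding analytic_atlas_def by blast

lemma inv_into_chart:
  assumes "analytic_atlas A" "c \<in> A" "z \<in> fst c"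
  shows "inv_into (fst c) (snd c) (snd c z) = z"
  using analytic_atlas_chartD(3)[OF assms(1,2)] assms(3) by (simp add: inv_into_f_f)

lemma open_chart_image:
  assumes "analytic_atlas A" "c \<in> A" "open T" "T \<subseteq> fst c"
  shows "open (snd c ` T)"
proof -
  obtain \<psi> where h: "homeomorphism (fst c) (snd c ` fst c) (snd c) \<psi>"
    using analytic_atlas_chartD(4)[OF assms(1,2)] by blast
  have "openin (top_of_set (fst c)) T" using open_subset assms(3,4) by blast
  then have "openin (top_of_set (snd c ` fst c)) (snd c ` T)"
    by (rule homeomorphism_imp_open_map[OF h])
  then show ?thesis using analytic_atlas_chartD(2)[OF assms(1,2)] openin_open_trans by blast
qed

lemma chart_preimage_ball:
  assumes A: "analytic_atlas A" and c: "c \<in> A" and ball: "ball y e \<subseteq> snd c ` fst c"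
  shows "open {z \<in> fst c. snd c z \<in> ball y e}" "connected {z \<in> fst c. snd c z \<in> ball y e}"
proof -
  obtain \<psi> where h: "homeomorphism (fst c) (snd c ` fst c) (snd c) \<psi>"
    using analytic_atlas_chartD(4)[OF A c] by blast
  have "open (fst c \<inter> snd c -` ball y e)"
    by (rule continuous_open_preimage[OF homeomorphism_cont1[OF h] analytic_atlas_chartD(1)[OF A c]])
       simp
  moreover have "fst c \<inter> snd c -` ball y e = {z \<in> fst c. snd c z \<in> ball y e}" by blast
  ultimately show "open {z \<in> fst c. snd c z \<in> ball y e}" by simp
  have "{z \<in> fst c. snd c z \<in> ball y e} = \<psi> ` ball y e"
  proof
    show "{z \<in> fst c. snd c z \<in> ball y e} \<subseteq> \<psi> ` ball y e"
      using homeomorphism_apply1[OF h] by force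
    show "\<psi> ` ball y e \<subseteq> {z \<in> fst c. snd c z \<in> ball y e}"
    proof (rule image_subsetI)
      fix y' assume "y' \<in> ball y e"
      moreover from this have "y' \<in> snd c ` fst c" using ball by blast
      ultimately show "\<psi> y' \<in> {z \<in> fst c. snd c z \<in> ball y e}"
        using homeomorphism_apply2[OF h] homeomorphism_image2[OF h] by auto
    qed
  qed
  moreover have "connected (\<psi> ` ball y e)"
    using connected_continuous_image[OF continuous_on_subset[OF homeomorphism_cont2[OF h] ball]]
    by simp
  ultimately show "connected {z \<in> fst c. snd c z \<in> ball y e}" by simp
qed

lemma chart_preimage_image:
  assumes "analytic_atlas A" "c \<in> A" "S \<subseteq> fst c"
  shows "{z \<in> fst c. snd c z \<in> snd c ` S} = S"
  using inj_on_image_mem_iff[OF analytic_atlas_chartD(3)[OF assms(1,2)] _ assms(3)] assms(3)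
  by blast

lemma analytic_atlas_connected_nhd:
  fixes A :: "('m::topological_space, 'e::euclidean_space) chart set" and U :: "'m set"
  assumes A: "analytic_atlas A" and "open U" "q \<in> U"
  obtains W where "connected W" "open W" "q \<in> W" "W \<subseteq> U"
proof -
  obtain c where c: "c \<in> A" "q \<in> fst c" using analytic_atlas_cover[OF A] by blast
  have "open (snd c ` (U \<inter> fst c))"
    using open_chart_image[OF A c(1)] analytic_atlas_chartD(1)[OF A c(1)] assms(2) by auto
  moreover have "snd c q \<in> snd c ` (U \<inter> fst c)" using assms(3) c(2) by blast
  ultimately obtain e where e: "e > 0" "ball (snd c q) e \<subseteq> snd c ` (U \<inter> fst c)"
    using open_contains_ball by blast
  define W where "W = {z \<in> fst c. snd c z \<in> ball (snd c q) e}"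
  have "ball (snd c q) e \<subseteq> snd c ` fst c" using e(2) by blast
  then have "open W" "connected W" unfolding W_def by (rule chart_preimage_ball[OF A c(1)])+
  moreover have "W \<subseteq> {z \<in> fst c. snd c z \<in> snd c ` (U \<inter> fst c)}" using e(2) by (auto simp: W_def)
  then have "W \<subseteq> U" using chart_preimage_image[OF A c(1), of "U \<inter> fst c"] by simp
  ultimately show thesis using that c(2) e(1) by (simp add: W_def)
qed

lemma analytic_fun_on_chart_power_series:
  fixes A :: "('m::topological_space, 'e::euclidean_space) chart set"
  assumes A: "analytic_atlas A" and "open C" and f: "analytic_fun_on A C f" and "x0 \<in> C"
  obtains c r a where "c \<in> A" "x0 \<in> fst c" "r > 0" "ball (snd c x0) r \<subseteq> snd c ` (C \<inter> fst c)"
    and "power_series_on_ball a (snd c x0) r (f \<circ> inv_into (fst c) (snd c))"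
proof -
  obtain c where c: "c \<in> A" "x0 \<in> fst c" using analytic_atlas_cover[OF A] by blast
  define S where "S = snd c ` (C \<inter> fst c)"
  have "open S" unfolding S_def
    using open_chart_image[OF A c(1)] analytic_atlas_chartD(1)[OF A c(1)] \<open>open C\<close> by auto
  have "snd c x0 \<in> S" using \<open>x0 \<in> C\<close> c(2) by (simp add: S_def)
  moreover have "ranalytic_on S (f \<circ> inv_into (fst c) (snd c))"
    using f c(1) by (simp add: analytic_fun_on_def S_def)
  ultimately obtain r a where "r > 0"
    and series: "power_series_on_ball a (snd c x0) r (f \<circ> inv_into (fst c) (snd c))"
    unfolding ranalytic_on_iff_power_series by blast
  obtain e where "e > 0" and e: "ball (snd c x0) e \<subseteq> S"
    using \<open>open S\<close> \<open>snd c x0 \<in> S\<close> open_contains_ball by blast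
  have "min r e > 0" using \<open>r > 0\<close> \<open>e > 0\<close> by simp
  moreover have "ball (snd c x0) (min r e) \<subseteq> snd c ` (C \<inter> fst c)" using e by (auto simp: S_def)
  moreover have "power_series_on_ball a (snd c x0) (min r e) (f \<circ> inv_into (fst c) (snd c))"
    using series by (simp add: power_series_on_ball_def)
  ultimately show thesis by (rule that[OF c])
qed

lemma analytic_fun_on_vanishing_spreads:
  fixes A :: "('m::topological_space, 'e::euclidean_space) chart set"
  assumes A: "analytic_atlas A" and "open C" and f: "analytic_fun_on A C f" and "x0 \<in> C"
  obtains T where "open T" "x0 \<in> T" "T \<subseteq> C"
    and "\<And>x N z. x \<in> T \<Longrightarrow> open N \<Longrightarrow> x \<in> N \<Longrightarrow> (\<And>z. z \<in> N \<Longrightarrow> f z = 0)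
      \<Longrightarrow> z \<in> T \<Longrightarrow> f z = 0"
proof -
  obtain c r a where c: "c \<in> A" "x0 \<in> fst c" and "r > 0"
    and ball: "ball (snd c x0) r \<subseteq> snd c ` (C \<inter> fst c)"
    and series: "power_series_on_ball a (snd c x0) r (f \<circ> inv_into (fst c) (snd c))"
    by (rule analytic_fun_on_chart_power_series[OF assms])
  define g where "g = f \<circ> inv_into (fst c) (snd c)"
  have g_chart: "g (snd c z) = f z" if "z \<in> fst c" for z
    using inv_into_chart[OF A c(1) that] by (simp add: g_def)
  define T where "T = {z \<in> fst c. snd c z \<in> ball (snd c x0) r}"
  have "ball (snd c x0) r \<subseteq> snd c ` fst c" using ball by blast
  then have "open T" unfolding T_def by (rule chart_preimage_ball[OF A c(1)])
  moreover have "x0 \<in> T" using c(2) \<open>r > 0\<close> by (simp add: T_def)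
  moreover have "T \<subseteq> C"
  proof -
    have "T \<subseteq> {z \<in> fst c. snd c z \<in> snd c ` (C \<inter> fst c)}" using ball by (auto simp: T_def)
    then show ?thesis using chart_preimage_image[OF A c(1), of "C \<inter> fst c"] by simp
  qed
  moreover have "f z = 0"
    if "x \<in> T" "open N" "x \<in> N" and N: "\<And>z. z \<in> N \<Longrightarrow> f z = 0" and "z \<in> T" for x N z
  proof -
    have "open (snd c ` (N \<inter> T))"
      using \<open>open T\<close> \<open>open N\<close> by (intro open_chart_image[OF A c(1)]) (auto simp: T_def)
    moreover have "snd c x \<in> snd c ` (N \<inter> T)" using that(1,3) by blast
    ultimately obtain \<epsilon> where "\<epsilon> > 0" and \<epsilon>: "ball (snd c x) \<epsilon> \<subseteq> snd c ` (N \<inter> T)"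
      using open_contains_ball by blast
    have g_vanishing: "g y = 0" if "y \<in> ball (snd c x) \<epsilon>" for y
    proof -
      obtain z' where "z' \<in> N" "z' \<in> T" "y = snd c z'"
        using \<epsilon> \<open>y \<in> ball (snd c x) \<epsilon>\<close> by blast
      then show ?thesis using N g_chart[of z'] by (simp add: T_def)
    qed
    have "dist (snd c x0) (snd c x) < r" and z: "snd c z \<in> ball (snd c x0) r"
      using \<open>x \<in> T\<close> \<open>z \<in> T\<close> by (simp_all add: T_def)
    then have "g (snd c z) = 0"
      using power_series_eq_0_if_eq_0_on_ball[OF series[folded g_def] _ \<open>\<epsilon> > 0\<close> g_vanishing z]
      by blast
    then show ?thesis using g_chart \<open>z \<in> T\<close> by (simp add: T_def)
  qed
  ultimately show thesis by (rule that)
qed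

theorem analytic_fun_on_identity:
  fixes A :: "('m::topological_space, 'e::euclidean_space) chart set"
  assumes A: "analytic_atlas A" and "connected C" "open C" and f: "analytic_fun_on A C f"
    and "open W" "W \<noteq> {}" "W \<subseteq> C" "\<And>z. z \<in> W \<Longrightarrow> f z = 0" and "z \<in> C"
  shows "f z = 0"
proof -
  define vanishes_near where "vanishes_near x \<longleftrightarrow> (\<exists>N. open N \<and> x \<in> N \<and> (\<forall>z\<in>N. f z = 0))" for x
  obtain w where "w \<in> W" using \<open>W \<noteq> {}\<close> by blast
  have "vanishes_near z"
  proof (rule connected_induction_simple[OF \<open>connected C\<close>])
    show "w \<in> C" "z \<in> C" using \<open>w \<in> W\<close> \<open>W \<subseteq> C\<close> \<open>z \<in> C\<close> by auto
    show "vanishes_near w" using \<open>w \<in> W\<close> \<open>open W\<close> assms(8) unfolding vanishes_near_def by blast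
  next
    fix x0 assume "x0 \<in> C"
    then obtain T where "open T" "x0 \<in> T" "T \<subseteq> C"
      and spread: "\<And>x N z. x \<in> T \<Longrightarrow> open N \<Longrightarrow> x \<in> N \<Longrightarrow> (\<And>z. z \<in> N \<Longrightarrow> f z = 0)
        \<Longrightarrow> z \<in> T \<Longrightarrow> f z = 0"
      using analytic_fun_on_vanishing_spreads[OF A \<open>open C\<close> f] by metis
    have "vanishes_near y" if "x \<in> T" "y \<in> T" "vanishes_near x" for x y
    proof -
      obtain N where "open N" "x \<in> N" "\<forall>z\<in>N. f z = 0"
        using \<open>vanishes_near x\<close> unfolding vanishes_near_def by blast
      then have "\<forall>z\<in>T. f z = 0" using spread[OF \<open>x \<in> T\<close>] by blast
      then show ?thesis using \<open>open T\<close> \<open>y \<in> T\<close> unfolding vanishes_near_def by blast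
    qed
    moreover have "openin (top_of_set C) T" using open_subset \<open>T \<subseteq> C\<close> \<open>open T\<close> by blast
    ultimately show "\<exists>T. openin (top_of_set C) T \<and> x0 \<in> T \<and>
        (\<forall>x\<in>T. \<forall>y\<in>T. vanishes_near x \<longrightarrow> vanishes_near y)"
      using \<open>x0 \<in> T\<close> by blast
  qed
  then show ?thesis unfolding vanishes_near_def by blast
qed

lemma ranalytic_on_subset_cong:
  assumes f: "ranalytic_on S f" and "open T" "T \<subseteq> S" and eq: "\<And>y. y \<in> T \<Longrightarrow> g y = f y"
  shows "ranalytic_on T g"
  unfolding ranalytic_on_iff_power_series
proof
  fix x assume "x \<in> T"
  then obtain r a where "r > 0" and series: "power_series_on_ball a x r f"
    using f \<open>T \<subseteq> S\<close> unfolding ranalytic_on_iff_power_series by blast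
  obtain e where "e > 0" "ball x e \<subseteq> T" using \<open>open T\<close> \<open>x \<in> T\<close> open_contains_ball by blast
  then have "power_series_on_ball a x (min r e) g"
    using series eq by (auto simp: power_series_on_ball_def)
  then show "\<exists>r>0. \<exists>a. power_series_on_ball a x r g"
    using \<open>r > 0\<close> \<open>e > 0\<close> by (intro exI[of _ "min r e"]) auto
qed

lemma analytic_vf_on_restrict:
  assumes A: "analytic_atlas A" and X: "analytic_vf_on A U X" and "open C" "C \<subseteq> U"
  shows "analytic_vf_on A C (restrict_vf C X)"
proof -
  have vanishing: "\<forall>c p. (c \<notin> A \<or> p \<notin> U \<or> p \<notin> fst c) \<longrightarrow> X c p = 0"
    and transform: "\<forall>c\<in>A. \<forall>d\<in>A. \<forall>p\<in>U \<inter> fst c \<inter> fst d.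
        \<exists>D. (transition c d has_derivative D) (at (snd c p)) \<and> X d p = D (X c p)"
    using X by (simp_all add: analytic_vf_on_def vector_field_on_def)
  have "vector_field_on A C (restrict_vf C X)"
    unfolding vector_field_on_def
  proof (intro conjI allI impI ballI)
    fix c p assume "c \<notin> A \<or> p \<notin> C \<or> p \<notin> fst c"
    then show "restrict_vf C X c p = 0"
      using vanishing[rule_format, of c p] by (cases "p \<in> C") (auto simp: restrict_vf_def)
  next
    fix c d p assume "c \<in> A" "d \<in> A" "p \<in> C \<inter> fst c \<inter> fst d"
    moreover from this have "p \<in> U \<inter> fst c \<inter> fst d" using \<open>C \<subseteq> U\<close> by blast
    ultimately show "\<exists>D. (transition c d has_derivative D) (at (snd c p)) \<and>
        restrict_vf C X d p = D (restrict_vf C X c p)"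
      using transform by (simp add: restrict_vf_def)
  qed
  moreover have "vanalytic_on (snd c ` (C \<inter> fst c)) (local_rep (restrict_vf C X) c)"
    if c: "c \<in> A" for c
    unfolding vanalytic_on_def
  proof
    fix b :: 'b assume "b \<in> Basis"
    then have "ranalytic_on (snd c ` (U \<inter> fst c)) (\<lambda>y. local_rep X c y \<bullet> b)"
      using X c by (auto simp: analytic_vf_on_def vanalytic_on_def)
    then show "ranalytic_on (snd c ` (C \<inter> fst c)) (\<lambda>y. local_rep (restrict_vf C X) c y \<bullet> b)"
    proof (rule ranalytic_on_subset_cong)
      show "open (snd c ` (C \<inter> fst c))"
        using \<open>open C\<close> analytic_atlas_chartD(1)[OF A c] by (intro open_chart_image[OF A c]) auto
      show "snd c ` (C \<inter> fst c) \<subseteq> snd c ` (U \<inter> fst c)" using \<open>C \<subseteq> U\<close> by auto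
    next
      fix y assume "y \<in> snd c ` (C \<inter> fst c)"
      then obtain z where "z \<in> C" "z \<in> fst c" "y = snd c z" by auto
      then show "local_rep (restrict_vf C X) c y \<bullet> b = local_rep X c y \<bullet> b"
        using inv_into_chart[OF A c] by (simp add: local_rep_def restrict_vf_def)
    qed
  qed
  ultimately show ?thesis by (simp add: analytic_vf_on_def)
qed

lemma restrict_vf_restrict_vf: "V \<subseteq> W \<Longrightarrow> restrict_vf V (restrict_vf W X) = restrict_vf V X"
  by (auto simp: restrict_vf_def fun_eq_iff)

lemma sheaf_lvf_subspace:
  assumes "sheaf_lvf A F" "connected U" "open U"
  shows "zero_vf \<in> F U"
    and "X \<in> F U \<Longrightarrow> Y \<in> F U \<Longrightarrow> (\<lambda>c p. X c p + Y c p) \<in> F U"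
    and "X \<in> F U \<Longrightarrow> (\<lambda>c p. r *\<^sub>R X c p) \<in> F U"
proof -
  have "F U \<subseteq> {X. smooth_vf_on A U X} \<and> zero_vf \<in> F U \<and>
      (\<forall>X\<in>F U. \<forall>Y\<in>F U. (\<lambda>c p. X c p + Y c p) \<in> F U) \<and>
      (\<forall>X\<in>F U. \<forall>r::real. (\<lambda>c p. r *\<^sub>R X c p) \<in> F U)"
    using conjunct1[OF assms(1)[unfolded sheaf_lvf_def], rule_format, OF conjI[OF assms(2,3)]] .
  then show "zero_vf \<in> F U"
    and "X \<in> F U \<Longrightarrow> Y \<in> F U \<Longrightarrow> (\<lambda>c p. X c p + Y c p) \<in> F U"
    and "X \<in> F U \<Longrightarrow> (\<lambda>c p. r *\<^sub>R X c p) \<in> F U"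
    by blast+
qed

lemma sheaf_lvf_restrict:
  assumes "sheaf_lvf A F" "connected U" "open U" "connected V" "open V" "V \<subseteq> U" "X \<in> F U"
  shows "restrict_vf V X \<in> F V"
proof -
  have "\<forall>U V X. connected U \<and> open U \<and> connected V \<and> open V \<and> V \<subseteq> U \<and> X \<in> F U
      \<longrightarrow> restrict_vf V X \<in> F V"
    using assms(1) unfolding sheaf_lvf_def by (rule conjunct1[OF conjunct2])
  then show ?thesis using assms(2-7) by blast
qed

lemma sheaf_lvf_lincomb:
  fixes k :: nat
  assumes "sheaf_lvf A F" "connected U" "open U" "\<forall>i<k. Xs i \<in> F U"
  shows "(\<lambda>c p. \<Sum>i<k. a i *\<^sub>R Xs i c p) \<in> F U"
  using assms(4)
proof (induction k)
  case 0
  then show ?case using sheaf_lvf_subspace(1)[OF assms(1-3)] by (simp add: zero_vf_def)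
next
  case (Suc k)
  then have "(\<lambda>c p. (\<Sum>i<k. a i *\<^sub>R Xs i c p) + a k *\<^sub>R Xs k c p) \<in> F U"
    by (intro sheaf_lvf_subspace(2,3)[OF assms(1-3)]) auto
  then show ?case by simp
qed

lemma restrict_vf_in_sheaf_sections:
  assumes "sheaf_lvf A F" "connected U" "open U" "X \<in> F U" "W \<subseteq> U"
  shows "restrict_vf W X \<in> sheaf_sections F W"
  unfolding sheaf_sections_def
proof (intro CollectI allI impI)
  fix V assume "connected V \<and> open V \<and> V \<subseteq> W"
  moreover from this have "V \<subseteq> U" using assms(5) by blast
  ultimately show "restrict_vf V (restrict_vf W X) \<in> F V"
    using sheaf_lvf_restrict[OF assms(1-3)] assms(4,5) by (simp add: restrict_vf_restrict_vf)
qed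

text \<open>The defining functionals of an analytically determined sheaf are analytic, so by the
  identity theorem they vanish on a connected open set as soon as they vanish on an open part.\<close>
lemma analytically_determined_sections_extend:
  fixes A :: "('m::topological_space, 'e::euclidean_space) chart set"
  assumes A: "analytic_atlas A" and "analytically_determined A F"
    and "connected C" "open C" and Y: "analytic_vf_on A C Y"
    and "open W" "W \<noteq> {}" "W \<subseteq> C" and restricted: "restrict_vf W Y \<in> sheaf_sections F W"
  shows "Y \<in> sheaf_sections F C"
proof -
  obtain \<A> :: "'m set \<Rightarrow> (('m, 'e) vf \<Rightarrow> ('m \<Rightarrow> real)) set" where
    analytic: "\<forall>U. open U \<longrightarrow> (\<forall>\<Phi>\<in>\<A> U. \<forall>X. analytic_vf_on A U X \<longrightarrow> analytic_fun_on A U (\<Phi> X))"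
    and restrict: "\<forall>U V \<Phi> X. open U \<and> open V \<and> V \<subseteq> U \<and> \<Phi> \<in> \<A> U \<and> analytic_vf_on A U X \<longrightarrow>
        (\<exists>G\<in>\<A> V. \<forall>p\<in>V. \<Phi> X p = G (restrict_vf V X) p)"
    and criterion: "\<forall>U X. open U \<and> analytic_vf_on A U X \<longrightarrow>
        (X \<in> sheaf_sections F U \<longleftrightarrow> (\<forall>\<Phi>\<in>\<A> U. \<forall>p\<in>U. \<Phi> X p = 0))"
    using assms(2) unfolding analytically_determined_def by (elim conjE exE)
  have YW: "analytic_vf_on A W (restrict_vf W Y)"
    by (rule analytic_vf_on_restrict[OF A Y \<open>open W\<close> \<open>W \<subseteq> C\<close>])
  have "\<Phi> Y z = 0" if "\<Phi> \<in> \<A> C" "z \<in> C" for \<Phi> z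
  proof (rule analytic_fun_on_identity[OF A \<open>connected C\<close> \<open>open C\<close> _ \<open>open W\<close> \<open>W \<noteq> {}\<close> \<open>W \<subseteq> C\<close> _ \<open>z \<in> C\<close>])
    show "analytic_fun_on A C (\<Phi> Y)" using analytic \<open>open C\<close> \<open>\<Phi> \<in> \<A> C\<close> Y by blast
    obtain G where "G \<in> \<A> W" "\<forall>p\<in>W. \<Phi> Y p = G (restrict_vf W Y) p"
      using restrict \<open>open C\<close> \<open>open W\<close> \<open>W \<subseteq> C\<close> \<open>\<Phi> \<in> \<A> C\<close> Y by blast
    moreover have "\<forall>\<Psi>\<in>\<A> W. \<forall>p\<in>W. \<Psi> (restrict_vf W Y) p = 0"
      using criterion \<open>open W\<close> YW restricted by blast
    ultimately show "\<And>p. p \<in> W \<Longrightarrow> \<Phi> Y p = 0" by simp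
  qed
  then show ?thesis using criterion \<open>open C\<close> Y by blast
qed

lemma germ_at_eqI:
  assumes "open V" "q \<in> V" "\<And>c p. p \<in> V \<Longrightarrow> X c p = Y c p"
  shows "germ_at q X = germ_at q Y"
proof -
  have "Z \<in> germ_at q Y" if "Z \<in> germ_at q X" "\<And>c p. p \<in> V \<Longrightarrow> X c p = Y c p" for X Y Z
  proof -
    have "\<exists>V'. open V' \<and> q \<in> V' \<and> (\<forall>c. \<forall>p\<in>V'. Z c p = X c p)"
      using that(1) by (simp add: germ_at_def)
    then obtain V' where "open V'" "q \<in> V'" "\<forall>c. \<forall>p\<in>V'. Z c p = X c p" by blast
    then show ?thesis using assms(1,2) that(2)
      by (auto simp: germ_at_def intro!: exI[of _ "V \<inter> V'"])
  qed
  then show ?thesis using assms(3) by (metis subsetI subset_antisym)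
qed

lemma germ_at_eqD:
  assumes "germ_at q X = germ_at q Y"
  obtains V where "open V" "q \<in> V" "\<And>c p. p \<in> V \<Longrightarrow> X c p = Y c p"
proof -
  have "X \<in> germ_at q X" by (auto simp: germ_at_def intro!: exI[of _ UNIV])
  then have "X \<in> germ_at q Y" using assms by simp
  then have "\<exists>V. open V \<and> q \<in> V \<and> (\<forall>c. \<forall>p\<in>V. X c p = Y c p)" by (simp add: germ_at_def)
  then show thesis using that by blast
qed

text \<open>The analytic extension lies in \<open>F\<close> near \<open>q\<close>, hence on all of \<open>C\<close>.\<close>
lemma germ_extends_to_section:
  fixes A :: "('m::topological_space, 'e::euclidean_space) chart set"
  assumes A: "analytic_atlas A" and "sheaf_lvf A F" "analytically_determined A F"
    and ext: "\<forall>q\<in>V. \<forall>g\<in>germs F q. \<exists>X. analytic_vf_on A V X \<and> germ_at q X = g"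
    and "connected C" "open C" "C \<subseteq> V" "q \<in> C" and g: "g \<in> germs F q"
  shows "\<exists>Y\<in>F C. germ_at q Y = g"
proof -
  obtain U X0 where U: "connected U" "open U" "q \<in> U" "X0 \<in> F U" and "g = germ_at q X0"
    using g by (auto simp: germs_def)
  obtain X where X: "analytic_vf_on A V X" "germ_at q X = g"
    using ext \<open>C \<subseteq> V\<close> \<open>q \<in> C\<close> g by blast
  obtain N where N: "open N" "q \<in> N" "\<And>c p. p \<in> N \<Longrightarrow> X c p = X0 c p"
    using germ_at_eqD X(2) \<open>g = germ_at q X0\<close> by metis
  obtain W where W: "connected W" "open W" "q \<in> W" "W \<subseteq> N \<inter> U \<inter> C"
    using analytic_atlas_connected_nhd[OF A, of "N \<inter> U \<inter> C" q] N U \<open>open C\<close> \<open>q \<in> C\<close> by blast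
  define Y where "Y = restrict_vf C X"
  have Y: "analytic_vf_on A C Y"
    unfolding Y_def using A X(1) \<open>open C\<close> \<open>C \<subseteq> V\<close> by (rule analytic_vf_on_restrict)
  have "restrict_vf W Y = restrict_vf W X0"
    using W N(3) by (auto simp: Y_def restrict_vf_def fun_eq_iff)
  moreover have "restrict_vf W X0 \<in> sheaf_sections F W"
    using W by (intro restrict_vf_in_sheaf_sections[OF \<open>sheaf_lvf A F\<close> U(1,2,4)]) auto
  ultimately have "Y \<in> sheaf_sections F C"
    using W by (intro analytically_determined_sections_extend[OF A \<open>analytically_determined A F\<close>
        \<open>connected C\<close> \<open>open C\<close> Y \<open>open W\<close>]) auto
  then have "restrict_vf C Y \<in> F C"
    using \<open>connected C\<close> \<open>open C\<close> by (simp add: sheaf_sections_def)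
  moreover have "restrict_vf C Y = Y" by (simp add: Y_def restrict_vf_restrict_vf)
  moreover have "germ_at q Y = germ_at q X"
    by (rule germ_at_eqI[OF \<open>open C\<close> \<open>q \<in> C\<close>]) (simp add: Y_def restrict_vf_def)
  ultimately show ?thesis using X(2) by auto
qed

definition sheaf_rank :: "('m set \<Rightarrow> ('m, 'e::real_vector) vf set) \<Rightarrow> 'm set \<Rightarrow> enat" where
  "sheaf_rank F U = Sup {enat k | k. \<exists>Xs. (\<forall>i<k. Xs i \<in> F U) \<and> vf_lin_indep k Xs}"

lemma germ_at_lincomb_cong:
  fixes k :: nat
  assumes "\<forall>i<k. germ_at q (Ys i) = germ_at q (Xs i)"
  shows "germ_at q (\<lambda>c p. \<Sum>i<k. a i *\<^sub>R Ys i c p) = germ_at q (\<lambda>c p. \<Sum>i<k. a i *\<^sub>R Xs i c p)"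
proof -
  have "\<forall>i\<in>{..<k}. \<exists>V. open V \<and> q \<in> V \<and> (\<forall>c. \<forall>p\<in>V. Ys i c p = Xs i c p)"
    using assms germ_at_eqD by (metis lessThan_iff)
  then obtain Vs where Vs: "\<And>i. i < k \<Longrightarrow> open (Vs i) \<and> q \<in> Vs i \<and> (\<forall>c. \<forall>p\<in>Vs i. Ys i c p = Xs i c p)"
    by (metis lessThan_iff)
  show ?thesis
  proof (rule germ_at_eqI)
    show "open (\<Inter>i<k. Vs i)" using Vs by (intro open_INT) auto
    show "q \<in> (\<Inter>i<k. Vs i)" using Vs by auto
    show "(\<Sum>i<k. a i *\<^sub>R Ys i c p) = (\<Sum>i<k. a i *\<^sub>R Xs i c p)" if "p \<in> (\<Inter>i<k. Vs i)" for c p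
    proof (rule sum.cong[OF refl])
      fix i assume "i \<in> {..<k}"
      then have "Ys i c p = Xs i c p" using Vs that by blast
      then show "a i *\<^sub>R Ys i c p = a i *\<^sub>R Xs i c p" by simp
    qed
  qed
qed

lemma germ_lin_indep_cong:
  fixes k :: nat
  assumes "\<forall>i<k. germ_at q (Ys i) = germ_at q (Xs i)" "germ_lin_indep q k Xs"
  shows "germ_lin_indep q k Ys"
  unfolding germ_lin_indep_def
proof (rule allI, rule impI)
  fix a :: "nat \<Rightarrow> real"
  assume "germ_at q (\<lambda>c p. \<Sum>i<k. a i *\<^sub>R Ys i c p) = germ_at q zero_vf"
  then have "germ_at q (\<lambda>c p. \<Sum>i<k. a i *\<^sub>R Xs i c p) = germ_at q zero_vf"
    using germ_at_lincomb_cong[OF assms(1)] by simp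
  then show "\<forall>i<k. a i = 0" using assms(2) by (simp add: germ_lin_indep_def)
qed

lemma germ_lin_indep_imp_vf_lin_indep: "germ_lin_indep q (k::nat) Xs \<Longrightarrow> vf_lin_indep k Xs"
  by (simp add: germ_lin_indep_def vf_lin_indep_def)

lemma vf_lin_indep_imp_germ_lin_indep:
  fixes k :: nat
  assumes "sheaf_lvf A F" "unique_continuation F" "connected C" "open C" "q \<in> C"
    and Xs: "\<forall>i<k. Xs i \<in> F C" and "vf_lin_indep k Xs"
  shows "germ_lin_indep q k Xs"
  unfolding germ_lin_indep_def
proof (rule allI, rule impI)
  fix a :: "nat \<Rightarrow> real"
  let ?X = "\<lambda>c p. \<Sum>i<k. a i *\<^sub>R Xs i c p"
  assume "germ_at q ?X = germ_at q zero_vf"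
  then obtain V where "open V" "q \<in> V" "\<And>c p. p \<in> V \<Longrightarrow> ?X c p = zero_vf c p"
    by (rule germ_at_eqD) auto
  moreover have "?X \<in> F C" by (rule sheaf_lvf_lincomb[OF assms(1,3,4) Xs])
  ultimately have "?X = zero_vf"
    using \<open>unique_continuation F\<close> \<open>connected C\<close> \<open>open C\<close> \<open>q \<in> C\<close>
    unfolding unique_continuation_def
    by (metis (no_types, lifting) Int_iff empty_iff inf_le2 open_Int zero_vf_def)
  then show "\<forall>i<k. a i = 0" using \<open>vf_lin_indep k Xs\<close> by (simp add: vf_lin_indep_def)
qed

text \<open>By unique continuation, sections over \<open>C\<close> are independent iff their germs at \<open>q\<close> are.\<close>
lemma kappa_eq_sheaf_rank:
  assumes "sheaf_lvf A F" "unique_continuation F" "connected C" "open C" "q \<in> C"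
    and ext: "\<And>g. g \<in> germs F q \<Longrightarrow> \<exists>Y\<in>F C. germ_at q Y = g"
  shows "kappa F q = sheaf_rank F C"
proof -
  have "(\<exists>Us Xs. (\<forall>i<k. connected (Us i) \<and> open (Us i) \<and> q \<in> Us i \<and> Xs i \<in> F (Us i))
      \<and> germ_lin_indep q k Xs) \<longleftrightarrow> (\<exists>Xs. (\<forall>i<k. Xs i \<in> F C) \<and> vf_lin_indep k Xs)" for k :: nat
  proof
    assume "\<exists>Us Xs. (\<forall>i<k. connected (Us i) \<and> open (Us i) \<and> q \<in> Us i \<and> Xs i \<in> F (Us i))
      \<and> germ_lin_indep q k Xs"
    then obtain Us Xs where "\<forall>i<k. connected (Us i) \<and> open (Us i) \<and> q \<in> Us i \<and> Xs i \<in> F (Us i)"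
      and indep: "germ_lin_indep q k Xs" by blast
    then have "\<forall>i<k. germ_at q (Xs i) \<in> germs F q" unfolding germs_def by blast
    then have "\<forall>i<k. \<exists>Y\<in>F C. germ_at q Y = germ_at q (Xs i)" using ext by blast
    then obtain Ys where Ys: "\<forall>i<k. Ys i \<in> F C \<and> germ_at q (Ys i) = germ_at q (Xs i)"
      by metis
    then have "vf_lin_indep k Ys"
      using germ_lin_indep_cong indep germ_lin_indep_imp_vf_lin_indep by blast
    then show "\<exists>Xs. (\<forall>i<k. Xs i \<in> F C) \<and> vf_lin_indep k Xs" using Ys by blast
  next
    assume "\<exists>Xs. (\<forall>i<k. Xs i \<in> F C) \<and> vf_lin_indep k Xs"
    then obtain Xs where "\<forall>i<k. Xs i \<in> F C" "vf_lin_indep k Xs" by blast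
    then have "germ_lin_indep q k Xs"
      using vf_lin_indep_imp_germ_lin_indep assms(1-5) by blast
    then show "\<exists>Us Xs. (\<forall>i<k. connected (Us i) \<and> open (Us i) \<and> q \<in> Us i \<and> Xs i \<in> F (Us i))
      \<and> germ_lin_indep q k Xs"
      using \<open>\<forall>i<k. Xs i \<in> F C\<close> assms(3-5) by (intro exI[of _ "\<lambda>_. C"] exI[of _ Xs]) auto
  qed
  then show ?thesis by (simp add: kappa_def sheaf_rank_def)
qed

lemma kappa_locally_constant:
  fixes A :: "('m::topological_space, 'e::euclidean_space) chart set"
  assumes A: "analytic_atlas A" and "admissible A F" "analytically_determined A F"
    and "open V" "p \<in> V"
    and ext: "\<forall>q\<in>V. \<forall>g\<in>germs F q. \<exists>X. analytic_vf_on A V X \<and> germ_at q X = g"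
  shows "\<exists>N. open N \<and> p \<in> N \<and> (\<forall>q\<in>N. kappa F q = kappa F p)"
proof -
  have sheaf: "sheaf_lvf A F" and "unique_continuation F"
    using \<open>admissible A F\<close> by (simp_all add: admissible_def)
  obtain C where C: "connected C" "open C" "p \<in> C" "C \<subseteq> V"
    using analytic_atlas_connected_nhd[OF A \<open>open V\<close> \<open>p \<in> V\<close>] by blast
  have "kappa F q = sheaf_rank F C" if "q \<in> C" for q
    using germ_extends_to_section[OF A sheaf \<open>analytically_determined A F\<close> ext C(1,2,4) that]
    by (rule kappa_eq_sheaf_rank[OF sheaf \<open>unique_continuation F\<close> C(1,2) that])
  then show ?thesis using C(2,3) by auto
qed

theorem proposition5p9:
  fixes A :: "('m::{t2_space, second_countable_topology}, 'e::euclidean_space) chart set"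
    and F :: "'m set \<Rightarrow> ('m, 'e) vf set"
  assumes "analytic_atlas A"
    and "connected (UNIV :: 'm set)"
    and "admissible A F"
    and "analytically_determined A F"
    and "\<forall>p. \<exists>Vp. open Vp \<and> p \<in> Vp \<and>
           (\<forall>q\<in>Vp. \<forall>g\<in>germs F q. \<exists>X. analytic_vf_on A Vp X \<and> germ_at q X = g)"
  shows "regular A F"
proof -
  have "kappa F constant_on UNIV"
  proof (rule locally_constant_imp_constant[OF assms(2)])
    fix p :: 'm
    obtain V where V: "open V" "p \<in> V"
      "\<forall>q\<in>V. \<forall>g\<in>germs F q. \<exists>X. analytic_vf_on A V X \<and> germ_at q X = g"
      using assms(5) by blast
    then obtain N where "open N" "p \<in> N" "\<forall>q\<in>N. kappa F q = kappa F p"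
      using kappa_locally_constant[OF assms(1,3,4) V] by blast
    then show "\<exists>T. openin (top_of_set UNIV) T \<and> p \<in> T \<and> (\<forall>q\<in>T. kappa F q = kappa F p)"
      using open_subset[OF subset_UNIV \<open>open N\<close>] by blast
  qed
  then have "\<exists>k0. \<forall>q. kappa F q = k0" by (simp add: constant_on_def)
  then show ?thesis using assms(3) by (simp add: regular_def)
qed

end
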